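(* Let $p(1,N):=\frac{1+a\varphi_N}{2+a\varphi_N}$. Then $$\max_{1\le k\le N}\ \max_{\tau_k(W)\le n<\tau_{k+1}(W)}\big(\log_N k-\log_N W(n)\big)\to0\quad\text{in }\mathbb P_1^{p(1,N),+}\text{-probability as }N\to\infty.$$
   Context: $a>0$ and $0<\varphi_N\le1$. Let $\mathbb W$ be the set of integer sequences $w=(w(0),w(1),\dots)$ with $w(n+1)-w(n)\in\{-1,1\}$. For $p\in(0,1)$ and $k\in\mathbb Z$, $\mathbb P_k^p$ is the law on $\mathbb W$ of the simple random walk $W$ with $W(0)=k$ that steps $+1$ with probability $p$ and $-1$ with probability $1-p$. For $k\in\mathbb N_0$, $\tau_k(w):=\min\{n\in\mathbb N_0: w(n)=k\}$ and $\tau_k^+(w):=\min\{n\in\mathbb N: w(n)=k\}$. For $p>1/2$ and $\ell\in\mathbb N_0$, $\mathbb P_\ell^{p,+}$ denotes $\mathbb P_\ell^p$ conditioned on the event $\{\tau_0^+(W)=\infty\}$. $\log_N x=\log x/\log N$. *)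

theory Defs
  imports "HOL-Probability.Probability"
begin

definition walk_of :: "int \<Rightarrow> bool stream \<Rightarrow> nat \<Rightarrow> int" where
  "walk_of k s n = k + (\<Sum>i<n. if s !! i then 1 else -1)"

definition walk_law :: "real \<Rightarrow> int \<Rightarrow> (nat \<Rightarrow> int) measure" where
  "walk_law p k = distr (stream_space (measure_pmf (bernoulli_pmf p)))
      (PiM UNIV (\<lambda>_::nat. count_space (UNIV::int set))) (walk_of k)"

definition never_returns0 :: "(nat \<Rightarrow> int) set" where
  "never_returns0 = {w. \<forall>n\<ge>1. w n \<noteq> 0}"

definition cond_walk_prob :: "real \<Rightarrow> int \<Rightarrow> (nat \<Rightarrow> int) set \<Rightarrow> real" where
  "cond_walk_prob p l A =
     measure (walk_law p l) (A \<inter> never_returns0) / measure (walk_law p l) never_returns0"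

definition tau :: "nat \<Rightarrow> (nat \<Rightarrow> int) \<Rightarrow> enat" where
  "tau k w = (if \<exists>n. w n = int k then enat (LEAST n. w n = int k) else \<infinity>)"

definition max_dev :: "nat \<Rightarrow> (nat \<Rightarrow> int) \<Rightarrow> real" where
  "max_dev N w = Max ((\<lambda>k. Max ((\<lambda>n. log (real N) (real k) - log (real N) (real_of_int (w n)))
        ` {n. tau k w \<le> enat n \<and> enat n < tau (Suc k) w})) ` {1..N})"

end

(* Write r = (1 - p) / p < 1. Conditioning on never returning to 0 divides by
   P_1(never return to 0) >= 1 - r, so it suffices to bound unconditioned probabilities,
   uniformly in p in (1/2, 1). Apart from a null event on which the walk stays bounded,
   a walk that never returns to 0 passes every level; a deviation larger than eps at a level
   k in [2^j, 2^(j+1)) then forces the walk to reach 2^j, to fall to about 2^(j+1) / N^eps,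
   and to climb to a high level L, all before touching 0. The gambler's ruin formulas,
   used as superharmonic majorants in a one-step induction, bound this by
   4 (1 - r) / N^eps; the log_2 N + 1 dyadic scales give 4 (log_2 N + 1) / N^eps -> 0. *)

theory Submission
  imports Defs "HOL-Real_Asymp.Real_Asymp"
begin

definition step_int :: "bool \<Rightarrow> int" where
  "step_int b = (if b then 1 else -1)"

lemma walk_of_0 [simp]: "walk_of k s 0 = k"
  by (simp add: walk_of_def)

lemma walk_of_Suc: "walk_of k s (Suc n) = walk_of k s n + step_int (s !! n)"
  by (simp add: walk_of_def step_int_def)

lemma walk_of_Suc_shift: "walk_of k s (Suc n) = walk_of (k + step_int (shd s)) (stl s) n"
  unfolding walk_of_def step_int_def
  by (simp add: sum.lessThan_Suc_shift del: sum.lessThan_Suc)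

lemma walk_of_Stream_Suc: "walk_of k (b ## s) (Suc n) = walk_of (k + step_int b) s n"
  by (simp add: walk_of_Suc_shift)

lemma abs_walk_of_Suc_diff: "\<bar>walk_of k s (Suc n) - walk_of k s n\<bar> = 1"
  by (simp add: walk_of_Suc step_int_def)

lemma measurable_walk_of [measurable]:
  "(\<lambda>s. walk_of k s n) \<in> measurable (stream_space (measure_pmf P)) (count_space UNIV)"
proof (induction n)
  case 0
  then show ?case by simp
next
  case (Suc n)
  have "(\<lambda>s. step_int (s !! n)) \<in> measurable (stream_space (measure_pmf P)) (count_space UNIV)"
    by (rule measurable_compose[OF measurable_snth]) simp
  with Suc show ?case
    unfolding walk_of_Suc by measurable
qed

lemma skip_free_ivt:
  fixes w :: "nat \<Rightarrow> int"
  assumes steps: "\<And>n. \<bar>w (Suc n) - w n\<bar> \<le> 1"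
    and "a \<le> b" "min (w a) (w b) \<le> c" "c \<le> max (w a) (w b)"
  shows "\<exists>m. a \<le> m \<and> m \<le> b \<and> w m = c"
  using assms(2-)
proof (induction b)
  case 0
  then show ?case by auto
next
  case (Suc b)
  show ?case
  proof (cases "a = Suc b")
    case False
    then have "a \<le> b" using Suc.prems by simp
    show ?thesis
    proof (cases "min (w a) (w b) \<le> c \<and> c \<le> max (w a) (w b)")
      case True
      then show ?thesis using Suc.IH \<open>a \<le> b\<close> le_SucI by blast
    next
      case False
      then have "w (Suc b) = c" using Suc.prems steps[of b] by auto
      then show ?thesis using Suc.prems by auto
    qed
  qed (use Suc.prems in auto)
qed

section \<open>Visiting levels in a given order\<close>

text \<open>\<open>visits_in_order n x ts s\<close>: within \<open>n\<close> steps, the walk started at \<open>x\<close> and driven by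
  \<open>s\<close> visits the levels \<open>ts\<close> in this order without touching \<open>0\<close> before the last of them.
  Recursion on the first step stands in for the strong Markov property.\<close>
function visits_in_order :: "nat \<Rightarrow> int \<Rightarrow> int list \<Rightarrow> bool stream \<Rightarrow> bool" where
  "visits_in_order n x [] s = True"
| "visits_in_order n x (t # ts) s =
     (if x = t then visits_in_order n x ts s
      else case n of
        0 \<Rightarrow> False
      | Suc m \<Rightarrow> x \<noteq> 0 \<and> visits_in_order m (x + step_int (shd s)) (t # ts) (stl s))"
  by pat_completeness auto
termination
  by (relation "measures [\<lambda>(n, _, _, _). n, \<lambda>(_, _, ts, _). length ts]") auto

declare visits_in_order.simps(2) [simp del]

lemma visits_in_order_Cons_same [simp]:
  "visits_in_order n t (t # ts) s = visits_in_order n t ts s"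
  by (simp add: visits_in_order.simps(2))

lemma visits_in_order_0 [simp]: "x \<noteq> t \<Longrightarrow> \<not> visits_in_order 0 x (t # ts) s"
  by (simp add: visits_in_order.simps(2))

lemma visits_in_order_Suc_step [simp]:
  "x \<noteq> t \<Longrightarrow> visits_in_order (Suc m) x (t # ts) s \<longleftrightarrow>
     x \<noteq> 0 \<and> visits_in_order m (x + step_int (shd s)) (t # ts) (stl s)"
  by (simp add: visits_in_order.simps(2))

lemma measurable_visits_in_order [measurable]:
  "Measurable.pred (stream_space (measure_pmf P)) (visits_in_order n x ts)"
proof (induction ts arbitrary: n x)
  case Nil
  then show ?case by simp
next
  case (Cons t ts)
  have shd: "Measurable.pred (stream_space (measure_pmf P)) shd"
    using measurable_snth[of 0 "measure_pmf P"] by simp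
  show ?case
  proof (induction n arbitrary: x)
    case 0
    then show ?case using Cons by (cases "x = t") simp_all
  next
    case (Suc m)
    have "visits_in_order (Suc m) x (t # ts) = (\<lambda>s. x \<noteq> 0 \<and>
        (if shd s then visits_in_order m (x + 1) (t # ts) (stl s)
         else visits_in_order m (x - 1) (t # ts) (stl s)))" if "x \<noteq> t"
      using that by (auto simp: step_int_def)
    then show ?case
      using Cons.IH Suc.IH shd by (cases "x = t") simp_all
  qed
qed

lemma visits_in_order_Suc:
  "visits_in_order n x ts s \<Longrightarrow> visits_in_order (Suc n) x ts s"
proof (induction n x ts s rule: visits_in_order.induct)
  case (2 n x t ts s)
  then show ?case by (cases n; cases "x = t") auto
qed simp

lemma visits_in_orderI:
  assumes "list_all2 (\<lambda>m t. m \<le> n \<and> walk_of x s m = t) ns ts" "sorted ns"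
    and "\<forall>i<n. walk_of x s i \<noteq> 0"
  shows "visits_in_order n x ts s"
  using assms
proof (induction n x ts s arbitrary: ns rule: visits_in_order.induct)
  case (2 n x t ts s)
  then obtain m ms where ns: "ns = m # ms" by (cases ns) auto
  show ?case
  proof (cases "x = t")
    case True
    then show ?thesis using "2.IH"(1)[OF True, of ms] "2.prems" ns by simp
  next
    case False
    have "walk_of x s m = t" using "2.prems"(1) ns by simp
    then have "m \<noteq> 0" using False walk_of_0[of x s] by metis
    moreover have "m \<le> n" using "2.prems"(1) ns by simp
    ultimately obtain n' where n: "n = Suc n'" by (cases n) auto
    define x' where "x' = x + step_int (shd s)"
    have shift: "walk_of x s k = walk_of x' (stl s) (k - 1)" if "k \<noteq> 0" for k
      using that walk_of_Suc_shift[of x s "k - 1"] by (simp add: x'_def)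
    have ge: "\<forall>k\<in>set ns. m \<le> k" using "2.prems"(2) ns by simp
    have "list_all2 (\<lambda>m t. m \<le> n' \<and> walk_of x' (stl s) m = t) (map (\<lambda>k. k - 1) ns) (t # ts)"
      unfolding list_all2_map1 using "2.prems"(1)
    proof (rule list.rel_mono_strong)
      fix k u assume "k \<in> set ns" "k \<le> n \<and> walk_of x s k = u"
      then show "k - 1 \<le> n' \<and> walk_of x' (stl s) (k - 1) = u"
        using ge \<open>m \<noteq> 0\<close> shift[of k] n by auto
    qed
    moreover have "sorted (map (\<lambda>k. k - 1) ns)"
      using "2.prems"(2) by (auto simp: sorted_iff_nth_mono intro: diff_le_mono)
    moreover have "\<forall>i<n'. walk_of x' (stl s) i \<noteq> 0"
    proof (intro allI impI)
      fix i assume "i < n'"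
      then have "walk_of x s (Suc i) \<noteq> 0" using "2.prems"(3) n by simp
      then show "walk_of x' (stl s) i \<noteq> 0" using shift[of "Suc i"] by simp
    qed
    ultimately have "visits_in_order n' x' (t # ts) (stl s)"
      using "2.IH"(2)[OF False n] unfolding x'_def by blast
    moreover have "x \<noteq> 0" using "2.prems"(3) n by force
    ultimately show ?thesis using False n by (simp add: x'_def)
  qed
qed simp

section \<open>One-step analysis on Bernoulli streams\<close>

abbreviation bernoulli_stream :: "real \<Rightarrow> bool stream measure" where
  "bernoulli_stream p \<equiv> stream_space (measure_pmf (bernoulli_pmf p))"

lemma prob_space_bernoulli_stream: "prob_space (bernoulli_stream p)"
  by (rule prob_space.prob_space_stream_space) (rule prob_space_measure_pmf)

lemma space_bernoulli_stream [simp]: "space (bernoulli_stream p) = UNIV"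
  by (simp add: space_stream_space)

lemma sets_bernoulli_stream_Collect:
  assumes "Measurable.pred (bernoulli_stream p) P"
  shows "{s. P s} \<in> sets (bernoulli_stream p)"
proof -
  have "{s \<in> space (bernoulli_stream p). P s} \<in> sets (bernoulli_stream p)"
    using assms by measurable
  then show ?thesis by simp
qed

lemma measure_bernoulli_stream_split:
  assumes p: "0 \<le> p" "p \<le> 1" and P: "Measurable.pred (bernoulli_stream p) P"
  shows "measure (bernoulli_stream p) {s. P s}
    = p * measure (bernoulli_stream p) {s. P (True ## s)}
      + (1 - p) * measure (bernoulli_stream p) {s. P (False ## s)}"
proof -
  interpret prob_space "bernoulli_stream p" by (rule prob_space_bernoulli_stream)
  have "Measurable.pred (bernoulli_stream p) (\<lambda>s. P (b ## s))" for b
    using P by measurable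
  then have sets: "{s. P (b ## s)} \<in> sets (bernoulli_stream p)" for b
    by (rule sets_bernoulli_stream_Collect)
  have "emeasure (bernoulli_stream p) {s. P s} = (\<integral>\<^sup>+s. indicator {s. P s} s \<partial>bernoulli_stream p)"
    using sets_bernoulli_stream_Collect[OF P] by simp
  also have "\<dots> = (\<integral>\<^sup>+s. indicator {s. P s} (True ## s) \<partial>bernoulli_stream p) * p
      + (\<integral>\<^sup>+s. indicator {s. P s} (False ## s) \<partial>bernoulli_stream p) * (1 - p)"
    using p P by (subst prob_space.nn_integral_stream_space[OF prob_space_measure_pmf]) simp_all
  also have "\<dots> = emeasure (bernoulli_stream p) {s. P (True ## s)} * p
      + emeasure (bernoulli_stream p) {s. P (False ## s)} * (1 - p)"
    using sets[of True] sets[of False]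
    by (simp add: nn_integral_indicator[symmetric] indicator_def)
  also have "\<dots> = ennreal (p * measure (bernoulli_stream p) {s. P (True ## s)}
      + (1 - p) * measure (bernoulli_stream p) {s. P (False ## s)})"
    using p by (simp add: emeasure_eq_measure ennreal_mult' ennreal_plus mult.commute)
  finally show ?thesis
    using p by (simp add: emeasure_eq_measure del: ennreal_plus)
qed

lemma measure_visits_in_order_le:
  fixes u :: "int \<Rightarrow> real"
  assumes p: "0 \<le> p" "p \<le> 1"
    and c: "0 \<le> c" "\<And>n. measure (bernoulli_stream p) {s. visits_in_order n t ts s} \<le> c"
    and u_nonneg: "\<And>x. 0 \<le> x \<Longrightarrow> 0 \<le> u x"
    and u_target: "1 \<le> u t"
    and u_superharmonic: "\<And>x. 1 \<le> x \<Longrightarrow> x \<noteq> t \<Longrightarrow> p * u (x + 1) + (1 - p) * u (x - 1) \<le> u x"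
    and "0 \<le> x"
  shows "measure (bernoulli_stream p) {s. visits_in_order n x (t # ts) s} \<le> u x * c"
proof -
  have at_target: "measure (bernoulli_stream p) {s. visits_in_order n t (t # ts) s} \<le> u t * c" for n
  proof -
    have "measure (bernoulli_stream p) {s. visits_in_order n t (t # ts) s} \<le> c"
      using c(2) by simp
    also have "c \<le> u t * c"
      using mult_right_mono[OF u_target c(1)] by simp
    finally show ?thesis .
  qed
  show ?thesis
    using \<open>0 \<le> x\<close>
  proof (induction n arbitrary: x)
    case 0
    then show ?case
      using at_target c(1) u_nonneg by (cases "x = t") simp_all
  next
    case (Suc m)
    consider "x = t" | "x \<noteq> t" "x = 0" | "x \<noteq> t" "1 \<le> x"
      using Suc.prems by linarith
    then show ?case
    proof cases
      case 1
      then show ?thesis using at_target by simp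
    next
      case 2
      then show ?thesis using c(1) u_nonneg by simp
    next
      case 3
      let ?\<mu> = "\<lambda>y. measure (bernoulli_stream p) {s. visits_in_order m y (t # ts) s}"
      have "measure (bernoulli_stream p) {s. visits_in_order (Suc m) x (t # ts) s}
          = p * ?\<mu> (x + 1) + (1 - p) * ?\<mu> (x - 1)"
        using p 3 by (subst measure_bernoulli_stream_split) (simp_all add: step_int_def)
      also have "\<dots> \<le> p * (u (x + 1) * c) + (1 - p) * (u (x - 1) * c)"
        using p 3 by (intro add_mono mult_left_mono Suc.IH) auto
      also have "\<dots> = (p * u (x + 1) + (1 - p) * u (x - 1)) * c"
        by (simp add: algebra_simps)
      also have "\<dots> \<le> u x * c"
        using u_superharmonic[OF 3(2,1)] c(1) by (rule mult_right_mono)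
      finally show ?thesis .
    qed
  qed
qed

lemma measure_UN_visits_in_order_le:
  assumes "\<And>n. measure (bernoulli_stream p) {s. visits_in_order n x ts s} \<le> c"
  shows "measure (bernoulli_stream p) (\<Union>n. {s. visits_in_order n x ts s}) \<le> c"
proof -
  interpret prob_space "bernoulli_stream p" by (rule prob_space_bernoulli_stream)
  have "incseq (\<lambda>n. {s. visits_in_order n x ts s})"
    by (rule incseq_SucI) (auto intro: visits_in_order_Suc)
  then have "(\<lambda>n. measure (bernoulli_stream p) {s. visits_in_order n x ts s})
      \<longlonglongrightarrow> measure (bernoulli_stream p) (\<Union>n. {s. visits_in_order n x ts s})"
    by (intro finite_Lim_measure_incseq) (auto intro: sets_bernoulli_stream_Collect)
  then show ?thesis by (rule LIMSEQ_le_const2) (use assms in auto)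
qed

section \<open>Gambler's ruin bounds\<close>

definition ruin_ratio :: "real \<Rightarrow> real" where
  "ruin_ratio p = (1 - p) / p"

text \<open>The scale function of the walk: for \<open>0 \<le> x \<le> t\<close>, \<open>ruin_scale p x / ruin_scale p t\<close> is the
  probability of reaching \<open>t\<close> before \<open>0\<close> from \<open>x\<close>.\<close>
definition ruin_scale :: "real \<Rightarrow> real \<Rightarrow> real" where
  "ruin_scale p x = 1 - ruin_ratio p powr x"

text \<open>The probability of visiting \<open>t\<close> before \<open>0\<close> from \<open>x \<ge> 0\<close> (for \<open>x > t\<close>, that of ever
  descending to \<open>t\<close>); only its harmonicity is used.\<close>
definition hit_prob :: "real \<Rightarrow> int \<Rightarrow> int \<Rightarrow> real" where
  "hit_prob p t x =
     (if x < t then ruin_scale p x / ruin_scale p t else ruin_ratio p powr (x - t))"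

lemma ruin_ratio_pos: "0 < p \<Longrightarrow> p < 1 \<Longrightarrow> 0 < ruin_ratio p"
  by (simp add: ruin_ratio_def)

lemma ruin_ratio_less_1: "1/2 < p \<Longrightarrow> ruin_ratio p < 1"
  by (simp add: ruin_ratio_def field_simps)

lemma ruin_ratio_powr_harmonic:
  assumes "0 < p" "p < 1"
  shows "p * ruin_ratio p powr (y + 1) + (1 - p) * ruin_ratio p powr (y - 1) = ruin_ratio p powr y"
proof -
  have r: "0 < ruin_ratio p" using ruin_ratio_pos[OF assms] .
  have "ruin_ratio p powr (y + 1) = ruin_ratio p powr y * ruin_ratio p"
    "ruin_ratio p powr (y - 1) = ruin_ratio p powr y / ruin_ratio p"
    using r by (simp_all add: powr_add powr_diff)
  then show ?thesis using assms r by (simp add: ruin_ratio_def field_simps)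
qed

lemma ruin_scale_harmonic:
  "0 < p \<Longrightarrow> p < 1 \<Longrightarrow> p * ruin_scale p (y + 1) + (1 - p) * ruin_scale p (y - 1) = ruin_scale p y"
  using ruin_ratio_powr_harmonic[of p y] by (simp add: ruin_scale_def algebra_simps)

lemma ruin_scale_pos: "1/2 < p \<Longrightarrow> p < 1 \<Longrightarrow> 0 < y \<Longrightarrow> 0 < ruin_scale p y"
  using ruin_ratio_pos[of p] ruin_ratio_less_1[of p] powr_less_mono2[of y "ruin_ratio p" 1]
  by (simp add: ruin_scale_def)

lemma ruin_scale_nonneg: "1/2 < p \<Longrightarrow> p < 1 \<Longrightarrow> 0 \<le> y \<Longrightarrow> 0 \<le> ruin_scale p y"
  using ruin_ratio_pos[of p] ruin_ratio_less_1[of p] powr_le1[of y "ruin_ratio p"]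
  by (simp add: ruin_scale_def)

lemma hit_prob_nonneg: "1/2 < p \<Longrightarrow> p < 1 \<Longrightarrow> 0 \<le> x \<Longrightarrow> 0 \<le> hit_prob p t x"
  by (simp add: hit_prob_def ruin_scale_nonneg ruin_scale_pos)

lemma hit_prob_self [simp]: "0 < p \<Longrightarrow> p < 1 \<Longrightarrow> hit_prob p t t = 1"
  using ruin_ratio_pos[of p] by (simp add: hit_prob_def)

lemma hit_prob_below:
  assumes "1/2 < p" "p < 1" "0 < t" "x \<le> t"
  shows "hit_prob p t x = ruin_scale p x / ruin_scale p t"
  using assms ruin_scale_pos[of p "real_of_int t"] ruin_ratio_pos[of p]
  by (cases "x = t") (simp_all add: hit_prob_def)

lemma hit_prob_harmonic:
  assumes p: "1/2 < p" "p < 1" and x: "1 \<le> x" "x \<noteq> t"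
  shows "p * hit_prob p t (x + 1) + (1 - p) * hit_prob p t (x - 1) = hit_prob p t x"
proof (cases "x < t")
  case True
  then have t: "0 < t" using x by simp
  have "hit_prob p t (x + 1) = ruin_scale p (real_of_int x + 1) / ruin_scale p t"
    "hit_prob p t (x - 1) = ruin_scale p (real_of_int x - 1) / ruin_scale p t"
    "hit_prob p t x = ruin_scale p x / ruin_scale p t"
    using hit_prob_below[OF p t] True by simp_all
  then have "p * hit_prob p t (x + 1) + (1 - p) * hit_prob p t (x - 1)
      = (p * ruin_scale p (real_of_int x + 1) + (1 - p) * ruin_scale p (real_of_int x - 1))
        / ruin_scale p t"
    by (simp add: add_divide_distrib)
  then show ?thesis
    using p ruin_scale_harmonic[of p "real_of_int x"] \<open>hit_prob p t x = _\<close> by simp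
next
  case False
  have "real_of_int (x + 1 - t) = real_of_int (x - t) + 1" "real_of_int (x - 1 - t) = real_of_int (x - t) - 1"
    by simp_all
  then show ?thesis
    using False x p ruin_ratio_powr_harmonic[of p "real_of_int (x - t)"]
    by (simp only: hit_prob_def if_False) simp
qed

lemma measure_visits_in_order_hit_prob_le:
  assumes p: "1/2 < p" "p < 1" and c: "0 \<le> c"
    and target: "\<And>n. measure (bernoulli_stream p) {s. visits_in_order n t ts s} \<le> c"
    and "0 \<le> x"
  shows "measure (bernoulli_stream p) {s. visits_in_order n x (t # ts) s} \<le> hit_prob p t x * c"
  using p c target hit_prob_nonneg[OF p] hit_prob_harmonic[OF p] \<open>0 \<le> x\<close>
  by (intro measure_visits_in_order_le) auto

text \<open>The heart of the estimate: a walk at level \<open>K\<close> falls to \<open>Y\<close> and climbs back to \<open>K\<close>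
  with probability \<open>r^(K-Y) (1 - r^Y) / (1 - r^K) \<le> Y / K\<close>, uniformly in \<open>r\<close>.\<close>
lemma powr_diff_mult_one_minus_powr_le:
  fixes r K Y :: real
  assumes "0 < r" "r < 1" "0 \<le> Y" "Y \<le> K" "0 < K"
  shows "r powr (K - Y) * (1 - r powr Y) \<le> Y / K * (1 - r powr K)"
proof -
  define l where "l = - ln r"
  define \<theta> where "\<theta> = Y / K"
  have l: "0 \<le> l" and \<theta>: "0 \<le> \<theta>" "\<theta> \<le> 1"
    using assms by (auto simp: l_def \<theta>_def)
  have r_powr: "r powr z = exp (- l * z)" for z
    using assms by (simp add: powr_def l_def)
  have "exp (l * ((1 - \<theta>) *\<^sub>R 0 + \<theta> *\<^sub>R K)) \<le> (1 - \<theta>) * exp (l * 0) + \<theta> * exp (l * K)"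
    by (rule convex_onD[OF convex_on_exp[OF l]]) (use \<theta> in auto)
  then have convex: "exp (l * Y) \<le> (1 - \<theta>) + \<theta> * exp (l * K)"
    using assms by (simp add: \<theta>_def)
  have "r powr (K - Y) = exp (- l * K) * exp (l * Y)"
    unfolding r_powr by (simp add: exp_add[symmetric] algebra_simps)
  also have "\<dots> \<le> exp (- l * K) * ((1 - \<theta>) + \<theta> * exp (l * K))"
    using convex by (intro mult_left_mono) auto
  also have "\<dots> = (1 - \<theta>) * r powr K + \<theta>"
    unfolding r_powr by (simp add: algebra_simps exp_add[symmetric])
  finally have "r powr (K - Y) \<le> (1 - \<theta>) * r powr K + \<theta>" .
  moreover have "r powr (K - Y) * r powr Y = r powr K"
    by (simp add: powr_add[symmetric])
  ultimately show ?thesis by (simp add: \<theta>_def algebra_simps)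
qed

lemma measure_visits_in_order_Nil_le_1:
  "measure (bernoulli_stream p) {s. visits_in_order n x [] s} \<le> 1"
  by (rule prob_space.prob_le_1[OF prob_space_bernoulli_stream])

lemma measure_visits_up_down_up_le:
  fixes K Y L :: int
  assumes p: "1/2 < p" "p < 1" and levels: "1 \<le> K" "0 \<le> Y" "Y < K" "K < L"
  shows "measure (bernoulli_stream p) (\<Union>n. {s. visits_in_order n 1 [K, Y, L] s})
    \<le> ruin_scale p 1 * (Y / K) / ruin_scale p L"
proof -
  have r: "0 < ruin_ratio p" "ruin_ratio p < 1"
    using p ruin_ratio_pos ruin_ratio_less_1 by auto
  have scale_pos: "0 < ruin_scale p 1" "0 < ruin_scale p K" "0 < ruin_scale p L"
    using levels by (auto intro: ruin_scale_pos[OF p])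
  define c1 where "c1 = ruin_scale p Y / ruin_scale p L"
  define c2 where "c2 = ruin_ratio p powr (K - Y) * c1"
  have c1: "0 \<le> c1" "c1 = hit_prob p L Y"
    using levels scale_pos ruin_scale_nonneg[OF p, of Y]
    by (simp_all add: c1_def hit_prob_below[OF p])
  have c2: "0 \<le> c2" "c2 = hit_prob p Y K * c1"
    using levels c1(1) unfolding c2_def by (simp_all add: hit_prob_def)
  have "measure (bernoulli_stream p) {s. visits_in_order n Y [L] s} \<le> c1" for n
    using measure_visits_in_order_hit_prob_le[OF p zero_le_one measure_visits_in_order_Nil_le_1]
      levels c1 by simp
  then have "measure (bernoulli_stream p) {s. visits_in_order n K [Y, L] s} \<le> c2" for n
    using measure_visits_in_order_hit_prob_le[OF p c1(1)] levels c2 by simp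
  then have "measure (bernoulli_stream p) {s. visits_in_order n 1 [K, Y, L] s}
      \<le> hit_prob p K 1 * c2" for n
    using measure_visits_in_order_hit_prob_le[OF p c2(1)] by simp
  then have "measure (bernoulli_stream p) (\<Union>n. {s. visits_in_order n 1 [K, Y, L] s})
      \<le> hit_prob p K 1 * c2"
    by (rule measure_UN_visits_in_order_le)
  also have "\<dots> = ruin_scale p 1 / ruin_scale p K
      * (ruin_ratio p powr (K - Y) * ruin_scale p Y) / ruin_scale p L"
    using levels by (simp add: hit_prob_below[OF p] c2_def c1_def)
  also have "\<dots> \<le> ruin_scale p 1 / ruin_scale p K * (Y / K * ruin_scale p K) / ruin_scale p L"
    using powr_diff_mult_one_minus_powr_le[OF r, of Y K] levels scale_pos
    by (intro divide_right_mono mult_left_mono) (simp_all add: ruin_scale_def)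
  also have "\<dots> = ruin_scale p 1 * (Y / K) / ruin_scale p L"
    using scale_pos by simp
  finally show ?thesis .
qed

lemma measure_avoids_0_ge:
  assumes p: "1/2 < p" "p < 1"
  shows "1 - ruin_ratio p \<le> measure (bernoulli_stream p) {s. \<forall>n\<ge>1. walk_of 1 s n \<noteq> 0}"
proof -
  interpret prob_space "bernoulli_stream p" by (rule prob_space_bernoulli_stream)
  let ?G = "{s. \<forall>n\<ge>1. walk_of 1 s n \<noteq> 0}"
  let ?H = "\<Union>n. {s. visits_in_order n 1 [0] s}"
  have "?G \<in> sets (bernoulli_stream p)"
    by (intro sets_bernoulli_stream_Collect) measurable
  have "{s. visits_in_order n 1 [0] s} \<in> sets (bernoulli_stream p)" for n
    by (intro sets_bernoulli_stream_Collect) measurable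
  then have H: "?H \<in> sets (bernoulli_stream p)"
    by (intro sets.countable_UN) auto
  have sub: "UNIV - ?G \<subseteq> ?H"
  proof
    fix s assume "s \<in> UNIV - ?G"
    then have "\<exists>m. walk_of 1 s m = 0" by auto
    define m where "m = (LEAST m. walk_of 1 s m = 0)"
    have "walk_of 1 s m = 0"
      unfolding m_def using \<open>\<exists>m. _\<close> by (rule LeastI_ex)
    moreover have "walk_of 1 s i \<noteq> 0" if "i < m" for i
      using not_less_Least[of i "\<lambda>m. walk_of 1 s m = 0"] that by (simp add: m_def)
    ultimately have "visits_in_order m 1 [0] s"
      by (intro visits_in_orderI[where ns = "[m]"]) auto
    then show "s \<in> ?H" by blast
  qed
  have "1 - measure (bernoulli_stream p) ?G = measure (bernoulli_stream p) (UNIV - ?G)"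
    using prob_compl[OF \<open>?G \<in> _\<close>] by simp
  also have "\<dots> \<le> measure (bernoulli_stream p) ?H"
    by (rule finite_measure_mono[OF sub H])
  also have "\<dots> \<le> hit_prob p 0 1 * 1"
    using measure_visits_in_order_hit_prob_le[OF p zero_le_one measure_visits_in_order_Nil_le_1]
    by (intro measure_UN_visits_in_order_le) simp
  also have "\<dots> = ruin_ratio p"
    using ruin_ratio_pos[of p] p by (simp add: hit_prob_def)
  finally show ?thesis by simp
qed

section \<open>Walks confined to a bounded interval\<close>

lemma sqrt_ruin_ratio_powr_eigen:
  assumes "0 < p" "p < 1"
  shows "p * sqrt (ruin_ratio p) powr (y + 1) + (1 - p) * sqrt (ruin_ratio p) powr (y - 1)
    = 2 * sqrt (p * (1 - p)) * sqrt (ruin_ratio p) powr y"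
proof -
  define \<sigma> where "\<sigma> = sqrt (ruin_ratio p)"
  have \<sigma>: "0 < \<sigma>" "p * \<sigma>\<^sup>2 = 1 - p"
    using assms ruin_ratio_pos[OF assms] by (simp_all add: \<sigma>_def ruin_ratio_def)
  have "(p * \<sigma>)\<^sup>2 = p * (p * \<sigma>\<^sup>2)"
    by (simp add: power_mult_distrib power2_eq_square)
  then have "sqrt (p * (1 - p)) = p * \<sigma>"
    using assms \<sigma> by (intro real_sqrt_unique) simp_all
  moreover have "(1 - p) / \<sigma> = p * \<sigma>"
    using \<sigma> by (simp add: field_simps power2_eq_square)
  moreover have "\<sigma> powr (y + 1) = \<sigma> powr y * \<sigma>" "\<sigma> powr (y - 1) = \<sigma> powr y / \<sigma>"
    using \<sigma>(1) by (simp_all add: powr_add powr_diff)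
  then have "p * \<sigma> powr (y + 1) + (1 - p) * \<sigma> powr (y - 1)
      = (p * \<sigma> + (1 - p) / \<sigma>) * \<sigma> powr y"
    by (simp add: distrib_right)
  ultimately show ?thesis
    unfolding \<sigma>_def[symmetric] by simp
qed

lemma two_sqrt_mult_one_minus_less_1:
  fixes p :: real
  assumes "p \<noteq> 1/2"
  shows "2 * sqrt (p * (1 - p)) < 1"
proof -
  have "p * (1 - p) = (1/2)\<^sup>2 - (p - 1/2)\<^sup>2"
    by (simp add: power2_eq_square algebra_simps)
  moreover have "0 < (p - 1/2)\<^sup>2"
    using assms by simp
  ultimately have "p * (1 - p) < (1/2)\<^sup>2"
    by linarith
  then have "sqrt (p * (1 - p)) < 1/2"
    using real_sqrt_less_iff[of _ "(1/2)\<^sup>2"] by simp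
  then show ?thesis by simp
qed

lemma all_le_Suc_iff: "(\<forall>i\<le>Suc m. Q i) \<longleftrightarrow> Q 0 \<and> (\<forall>i\<le>m. Q (Suc i))"
proof safe
  fix i assume "Q 0" "\<forall>i\<le>m. Q (Suc i)" "i \<le> Suc m"
  then show "Q i" by (cases i) auto
qed auto

lemma measure_stays_between_le:
  assumes p: "1/2 < p" "p < 1"
  shows "measure (bernoulli_stream p) {s. \<forall>i\<le>m. 0 < walk_of x s i \<and> walk_of x s i < L}
    \<le> sqrt (ruin_ratio p) powr (x - L) * (2 * sqrt (p * (1 - p))) ^ m"
proof -
  let ?\<sigma> = "sqrt (ruin_ratio p)" and ?\<rho> = "2 * sqrt (p * (1 - p))"
  have empty: "{s. \<forall>i\<le>m. 0 < walk_of x s i \<and> walk_of x s i < L} = {}"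
    if "\<not> (0 < x \<and> x < L)" for x m
    using that by (auto dest: spec[of _ 0])
  have nonneg: "0 \<le> ?\<sigma> powr (x - L) * ?\<rho> ^ m" for x m
    using p by simp
  show ?thesis
  proof (induction m arbitrary: x)
    case 0
    show ?case
    proof (cases "0 < x \<and> x < L")
      case True
      have "ln ?\<sigma> < 0"
        using p ruin_ratio_pos[of p] ruin_ratio_less_1[of p] by simp
      then have "1 \<le> ?\<sigma> powr (x - L)"
        using True mult_nonpos_nonpos[of "real_of_int (x - L)" "ln ?\<sigma>"] ruin_ratio_pos[of p] p
        by (simp add: powr_def)
      then show ?thesis
        using prob_space.prob_le_1[OF prob_space_bernoulli_stream] order.trans by fastforce
    next
      case False
      show ?thesis unfolding empty[OF False] measure_empty by (rule nonneg)
    qed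
  next
    case (Suc m)
    let ?\<mu> = "\<lambda>y. measure (bernoulli_stream p) {s. \<forall>i\<le>m. 0 < walk_of y s i \<and> walk_of y s i < L}"
    show ?case
    proof (cases "0 < x \<and> x < L")
      case True
      have "measure (bernoulli_stream p) {s. \<forall>i\<le>Suc m. 0 < walk_of x s i \<and> walk_of x s i < L}
          = p * ?\<mu> (x + 1) + (1 - p) * ?\<mu> (x - 1)"
        using p True
        by (subst measure_bernoulli_stream_split)
          (simp_all add: all_le_Suc_iff walk_of_Stream_Suc step_int_def)
      also have "\<dots> \<le> p * (?\<sigma> powr (x + 1 - L) * ?\<rho> ^ m) + (1 - p) * (?\<sigma> powr (x - 1 - L) * ?\<rho> ^ m)"
        using p by (intro add_mono mult_left_mono Suc.IH) auto
      also have "\<dots> = (p * ?\<sigma> powr (real_of_int (x - L) + 1) + (1 - p) * ?\<sigma> powr (real_of_int (x - L) - 1))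
          * ?\<rho> ^ m"
        by (simp add: algebra_simps)
      also have "\<dots> = ?\<sigma> powr (x - L) * ?\<rho> ^ Suc m"
        using p by (simp add: sqrt_ruin_ratio_powr_eigen)
      finally show ?thesis .
    next
      case False
      show ?thesis unfolding empty[OF False] measure_empty by (rule nonneg)
    qed
  qed
qed

lemma measure_stays_between_forever:
  assumes p: "1/2 < p" "p < 1"
  shows "measure (bernoulli_stream p) {s. \<forall>i. 0 < walk_of x s i \<and> walk_of x s i < L} = 0"
proof -
  interpret prob_space "bernoulli_stream p" by (rule prob_space_bernoulli_stream)
  let ?\<rho> = "2 * sqrt (p * (1 - p))"
  define c where "c = sqrt (ruin_ratio p) powr (x - L)"
  have "measure (bernoulli_stream p) {s. \<forall>i. 0 < walk_of x s i \<and> walk_of x s i < L} \<le> c * ?\<rho> ^ m"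
    for m
  proof -
    have "{s. \<forall>i. 0 < walk_of x s i \<and> walk_of x s i < L}
        \<subseteq> {s. \<forall>i\<le>m. 0 < walk_of x s i \<and> walk_of x s i < L}"
      by auto
    moreover have "{s. \<forall>i\<le>m. 0 < walk_of x s i \<and> walk_of x s i < L} \<in> sets (bernoulli_stream p)"
      by (intro sets_bernoulli_stream_Collect) measurable
    ultimately show ?thesis
      unfolding c_def using measure_stays_between_le[OF p, of m x L]
      by (meson finite_measure_mono order.trans)
  qed
  moreover have "(\<lambda>m. c * ?\<rho> ^ m) \<longlonglongrightarrow> c * 0"
    using two_sqrt_mult_one_minus_less_1[of p] p by (intro tendsto_mult_left LIMSEQ_power_zero) auto
  ultimately have "measure (bernoulli_stream p) {s. \<forall>i. 0 < walk_of x s i \<and> walk_of x s i < L} \<le> 0"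
    by (intro LIMSEQ_le_const[where a = "measure _ _"]) auto
  then show ?thesis by (simp add: order.antisym)
qed

lemma measurable_walk_of_PiM:
  "walk_of k \<in> measurable (bernoulli_stream p) (PiM UNIV (\<lambda>_::nat. count_space (UNIV::int set)))"
proof -
  have "(\<lambda>s i. walk_of k s i)
      \<in> measurable (bernoulli_stream p) (PiM UNIV (\<lambda>_::nat. count_space (UNIV::int set)))"
    by (rule measurable_PiM_single') auto
  then show ?thesis by simp
qed

lemma measure_walk_law_le:
  assumes "walk_of k -` A \<subseteq> C" "C \<in> sets (bernoulli_stream p)"
  shows "measure (walk_law p k) A \<le> measure (bernoulli_stream p) C"
proof (cases "A \<in> sets (PiM UNIV (\<lambda>_::nat. count_space (UNIV::int set)))")
  case True
  interpret prob_space "bernoulli_stream p" by (rule prob_space_bernoulli_stream)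
  have "measure (walk_law p k) A = measure (bernoulli_stream p) (walk_of k -` A)"
    unfolding walk_law_def using True measurable_walk_of_PiM by (subst measure_distr) auto
  also have "\<dots> \<le> measure (bernoulli_stream p) C"
    using assms by (intro finite_measure_mono) auto
  finally show ?thesis .
next
  case False
  then show ?thesis by (simp add: walk_law_def measure_notin_sets)
qed

lemma measure_walk_law_never_returns0:
  "measure (walk_law p k) never_returns0
    = measure (bernoulli_stream p) {s. \<forall>n\<ge>1. walk_of k s n \<noteq> 0}"
proof -
  have "{w \<in> space (PiM UNIV (\<lambda>_::nat. count_space (UNIV::int set))). \<forall>n. 1 \<le> n \<longrightarrow> w n \<noteq> 0}
      \<in> sets (PiM UNIV (\<lambda>_::nat. count_space (UNIV::int set)))"
    by measurable
  then have "never_returns0 \<in> sets (PiM UNIV (\<lambda>_::nat. count_space (UNIV::int set)))"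
    by (simp add: never_returns0_def space_PiM)
  then show ?thesis
    unfolding walk_law_def using measurable_walk_of_PiM
    by (subst measure_distr) (auto simp: never_returns0_def)
qed

section \<open>Deviations force dyadic dips\<close>

lemma walk_of_1_pos:
  assumes "walk_of 1 s \<in> never_returns0"
  shows "0 < walk_of 1 s n"
proof (rule ccontr)
  assume "\<not> 0 < walk_of 1 s n"
  then obtain m where "m \<le> n" "walk_of 1 s m = 0"
    using skip_free_ivt[of "walk_of 1 s" 0 n 0] abs_walk_of_Suc_diff by force
  moreover have "m \<noteq> 0"
    using \<open>walk_of 1 s m = 0\<close> by (metis walk_of_0 one_neq_zero)
  ultimately show False
    using assms by (simp add: never_returns0_def)
qed

lemma max_dev_gt_imp_deviation:
  fixes w :: "nat \<Rightarrow> int"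
  assumes steps: "\<And>n. \<bar>w (Suc n) - w n\<bar> \<le> 1" and w0: "w 0 = 1"
    and hits: "\<And>k. 1 \<le> k \<Longrightarrow> k \<le> Suc N \<Longrightarrow> \<exists>n. w n = int k"
    and N: "1 \<le> N" and dev: "\<epsilon> < \<bar>max_dev N w\<bar>"
  shows "\<exists>k\<in>{1..N}. \<exists>n. (LEAST m. w m = int k) \<le> n \<and> n < (LEAST m. w m = int (Suc k))
           \<and> \<epsilon> < log N k - log N (w n)"
proof -
  define T where "T k = (LEAST m. w m = int k)" for k
  have T_hit: "w (T k) = int k" and tau: "tau k w = enat (T k)" if "1 \<le> k" "k \<le> Suc N" for k
    using hits[OF that] LeastI_ex[of "\<lambda>m. w m = int k"] by (auto simp: T_def tau_def)
  have T_less: "T k < T (Suc k)" if k: "k \<in> {1..N}" for k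
  proof -
    obtain m where m: "m \<le> T (Suc k)" "w m = int k"
      using skip_free_ivt[of w 0 "T (Suc k)" "int k", OF steps] T_hit[of "Suc k"] w0 k by auto
    then have "T k \<le> m" unfolding T_def by (simp add: Least_le)
    moreover have "m \<noteq> T (Suc k)" using m T_hit[of "Suc k"] k by auto
    ultimately show ?thesis using m by simp
  qed
  define dev where "dev k n = log N (real k) - log N (real_of_int (w n))" for k n :: nat
  have dev_at_T: "dev k (T k) = 0" if "k \<in> {1..N}" for k
    using T_hit[of k] that by (simp add: dev_def)
  have max_dev_eq: "max_dev N w = Max ((\<lambda>k. Max (dev k ` {T k..<T (Suc k)})) ` {1..N})"
    unfolding max_dev_def dev_def
    by (intro arg_cong[where f = Max] image_cong refl) (auto simp: tau)
  have inner: "0 \<le> Max (dev k ` {T k..<T (Suc k)})" if "k \<in> {1..N}" for k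
  proof -
    have "dev k (T k) \<in> dev k ` {T k..<T (Suc k)}"
      using T_less[OF that] by simp
    then show ?thesis
      using Max_ge[of "dev k ` {T k..<T (Suc k)}"] dev_at_T[OF that] by fastforce
  qed
  have "Max (dev 1 ` {T 1..<T (Suc 1)}) \<le> max_dev N w"
    unfolding max_dev_eq using N by (intro Max_ge) auto
  then have "0 \<le> max_dev N w"
    using inner[of 1] N by simp
  with dev max_dev_eq obtain k where k: "k \<in> {1..N}" "\<epsilon> < Max (dev k ` {T k..<T (Suc k)})"
    using N by (auto simp: Max_gr_iff)
  then obtain n where "n \<in> {T k..<T (Suc k)}" "\<epsilon> < dev k n"
    using T_less[OF k(1)] by (auto simp: Max_gr_iff)
  then show ?thesis
    using k(1) by (auto simp: T_def dev_def)
qed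

lemma log_diff_gt_imp_powr_mult_less:
  fixes b k v \<epsilon> :: real
  assumes "1 < b" "0 < k" "0 < v" "\<epsilon> < log b k - log b v"
  shows "b powr \<epsilon> * v < k"
proof -
  have "\<epsilon> < log b (k / v)"
    using assms by (simp add: log_divide)
  then have "b powr \<epsilon> < k / v"
    using assms by (simp add: less_log_iff)
  then show ?thesis
    using assms by (simp add: field_simps)
qed

lemma pow2_le_iff_le_floor_log2:
  assumes "1 \<le> N"
  shows "2 ^ j \<le> N \<longleftrightarrow> j \<le> nat \<lfloor>log 2 (real N)\<rfloor>"
proof -
  have "0 \<le> log 2 (real N)"
    using assms by simp
  then have "j \<le> nat \<lfloor>log 2 (real N)\<rfloor> \<longleftrightarrow> real j \<le> log 2 (real N)"
    by (simp add: le_nat_iff le_floor_iff)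
  also have "\<dots> \<longleftrightarrow> 2 powr real j \<le> real N"
    using assms by (simp add: le_log_iff)
  also have "\<dots> \<longleftrightarrow> 2 ^ j \<le> N"
    by (simp add: powr_realpow flip: of_nat_le_iff)
  finally show ?thesis ..
qed

text \<open>A walk at a level \<open>k \<in> [2^j, 2^(j+1))\<close> that falls below \<open>k / N^\<epsilon>\<close> falls to
  \<open>dip_level N \<epsilon> j\<close> or lower.\<close>
definition dip_level :: "nat \<Rightarrow> real \<Rightarrow> nat \<Rightarrow> nat" where
  "dip_level N \<epsilon> j = nat \<lfloor>2 ^ (j + 1) / real N powr \<epsilon>\<rfloor>"

lemma dip_level_le: "real (dip_level N \<epsilon> j) \<le> 2 ^ (j + 1) / real N powr \<epsilon>"
proof -
  have "0 \<le> (2::real) ^ (j + 1) / real N powr \<epsilon>"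
    by simp
  then have "real (dip_level N \<epsilon> j) = real_of_int \<lfloor>(2::real) ^ (j + 1) / real N powr \<epsilon>\<rfloor>"
    by (simp add: dip_level_def)
  also have "\<dots> \<le> 2 ^ (j + 1) / real N powr \<epsilon>"
    by (rule of_int_floor_le)
  finally show ?thesis .
qed

lemma dip_level_less:
  assumes "2 < real N powr \<epsilon>"
  shows "dip_level N \<epsilon> j < 2 ^ j"
proof -
  have "(2::real) ^ (j + 1) / real N powr \<epsilon> < 2 ^ (j + 1) / 2"
    using assms by (intro divide_strict_left_mono) (auto intro: gr0I)
  then have "real (dip_level N \<epsilon> j) < 2 ^ (j + 1) / 2"
    using dip_level_le[of N \<epsilon> j] by linarith
  then show ?thesis
    by (simp flip: of_nat_less_iff)
qed

lemma le_dip_level: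
  fixes v :: int and k :: nat
  assumes "real N powr \<epsilon> * v < k" "k < 2 ^ (j + 1)" "1 \<le> N"
  shows "v \<le> int (dip_level N \<epsilon> j)"
proof -
  have "real k < real (2 ^ (j + 1))"
    using assms(2) by (simp only: of_nat_less_iff)
  then have "real N powr \<epsilon> * v < 2 ^ (j + 1)"
    using assms(1) by simp
  then have "real_of_int v \<le> 2 ^ (j + 1) / real N powr \<epsilon>"
    using assms(3) by (simp add: field_simps)
  then have "v \<le> \<lfloor>2 ^ (j + 1) / real N powr \<epsilon>\<rfloor>"
    by (simp add: le_floor_iff)
  then show ?thesis
    unfolding dip_level_def by linarith
qed

lemma visits_of_crossings:
  fixes K Y L :: int
  assumes pos: "\<And>i. 0 < walk_of 1 s i" and levels: "1 \<le> K" "Y < K" "Y < L"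
    and times: "a \<le> b" "b \<le> c"
    and crossings: "K \<le> walk_of 1 s a" "walk_of 1 s b \<le> Y" "L \<le> walk_of 1 s c"
  shows "\<exists>n. visits_in_order n 1 [K, Y, L] s"
proof -
  note ivt = skip_free_ivt[of "walk_of 1 s", OF abs_walk_of_Suc_diff[THEN eq_refl]]
  obtain n1 where n1: "n1 \<le> a" "walk_of 1 s n1 = K"
    using ivt[of 0 a K] levels crossings by auto
  obtain n2 where n2: "n1 \<le> n2" "n2 \<le> b" "walk_of 1 s n2 = Y"
    using ivt[of n1 b Y] n1 times levels crossings by auto
  obtain n3 where n3: "b \<le> n3" "n3 \<le> c" "walk_of 1 s n3 = L"
    using ivt[of b c L] times levels crossings by auto
  have "visits_in_order n3 1 [K, Y, L] s"
    using n1 n2 n3 times pos[THEN less_imp_neq, symmetric]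
    by (intro visits_in_orderI[where ns = "[n1, n2, n3]"]) auto
  then show ?thesis ..
qed

lemma deviation_imp_visits:
  fixes N L :: nat
  assumes N: "2 \<le> N" and Ne: "2 < real N powr \<epsilon>" and LN: "N < L"
    and never: "walk_of 1 s \<in> never_returns0" and reach: "int L \<le> walk_of 1 s i0"
    and dev: "\<epsilon> < \<bar>max_dev N (walk_of 1 s)\<bar>"
  shows "\<exists>j\<le>nat \<lfloor>log 2 (real N)\<rfloor>. \<exists>n. visits_in_order n 1 [2 ^ j, int (dip_level N \<epsilon> j), int L] s"
proof -
  define w where "w = walk_of 1 s"
  have pos: "0 < w i" for i
    using walk_of_1_pos[OF never] by (simp add: w_def)
  have steps: "\<bar>w (Suc i) - w i\<bar> \<le> 1" for i
    by (simp add: w_def abs_walk_of_Suc_diff)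
  note ivt = skip_free_ivt[of w, OF steps]
  have hits: "\<exists>n. w n = int k" if "1 \<le> k" "k \<le> Suc N" for k
    using ivt[of 0 i0 "int k"] that reach LN by (auto simp: w_def)
  obtain k n where k: "k \<in> {1..N}"
    and n: "(LEAST m. w m = int k) \<le> n" "n < (LEAST m. w m = int (Suc k))"
    and gap: "\<epsilon> < log N k - log N (w n)"
    using max_dev_gt_imp_deviation[OF steps _ hits _ dev[folded w_def]] N by (auto simp: w_def)
  have w_first_hit: "w (LEAST m. w m = int k) = int k"
    using hits[of k] k by (auto intro: LeastI_ex)
  have "n < i0"
  proof -
    obtain m where "m \<le> i0" "w m = int (Suc k)"
      using ivt[of 0 i0 "int (Suc k)"] reach k LN by (auto simp: w_def)
    then show ?thesis
      using n(2) Least_le[of "\<lambda>m. w m = int (Suc k)" m] by linarith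
  qed
  have dip: "real N powr \<epsilon> * w n < k"
    using log_diff_gt_imp_powr_mult_less[OF _ _ _ gap] N k pos[of n] by simp
  obtain j where j: "2 ^ j \<le> k" "k < 2 ^ (j + 1)"
    using ex_power_ivl1[of 2 k] k by auto
  have "2 ^ j \<le> N"
    using j k by simp
  then have j_le: "j \<le> nat \<lfloor>log 2 (real N)\<rfloor>"
    using pow2_le_iff_le_floor_log2 N by simp
  have dip_j: "w n \<le> int (dip_level N \<epsilon> j)"
    using le_dip_level[OF dip j(2)] N by simp
  have "dip_level N \<epsilon> j < 2 ^ j"
    by (rule dip_level_less[OF Ne])
  then show ?thesis
    using visits_of_crossings[of s "2 ^ j" "int (dip_level N \<epsilon> j)" "int L"
        "LEAST m. w m = int k" n i0] j_le j k LN pos n(1) \<open>n < i0\<close> w_first_hit dip_j reach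
    by (auto simp: w_def)
qed

text \<open>On walks that stay below \<open>L\<close> forever, \<open>max_dev\<close> is a junk value (a \<open>Max\<close> of infinite
  sets); these walks form a null set.\<close>
lemma deviation_event_subset:
  fixes N L :: nat
  assumes N: "2 \<le> N" and Ne: "2 < real N powr \<epsilon>" and LN: "N < L"
  shows "walk_of 1 -` ({w. \<epsilon> < \<bar>max_dev N w\<bar>} \<inter> never_returns0)
    \<subseteq> {s. \<forall>i. 0 < walk_of 1 s i \<and> walk_of 1 s i < L}
      \<union> (\<Union>j\<le>nat \<lfloor>log 2 (real N)\<rfloor>. \<Union>n. {s. visits_in_order n 1 [2 ^ j, int (dip_level N \<epsilon> j), int L] s})"
proof
  fix s assume "s \<in> walk_of 1 -` ({w. \<epsilon> < \<bar>max_dev N w\<bar>} \<inter> never_returns0)"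
  then have never: "walk_of 1 s \<in> never_returns0" and dev: "\<epsilon> < \<bar>max_dev N (walk_of 1 s)\<bar>"
    by auto
  show "s \<in> {s. \<forall>i. 0 < walk_of 1 s i \<and> walk_of 1 s i < L}
      \<union> (\<Union>j\<le>nat \<lfloor>log 2 (real N)\<rfloor>. \<Union>n. {s. visits_in_order n 1 [2 ^ j, int (dip_level N \<epsilon> j), int L] s})"
  proof (cases "\<exists>i0. int L \<le> walk_of 1 s i0")
    case True
    then show ?thesis
      using deviation_imp_visits[OF N Ne LN never _ dev] by blast
  next
    case False
    then show ?thesis
      using walk_of_1_pos[OF never] by (auto simp: not_le)
  qed
qed

lemma ex_ruin_scale_ge_half:
  assumes p: "1/2 < p" "p < 1"
  shows "\<exists>L>N. 1/2 \<le> ruin_scale p (real L)"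
proof -
  have r: "0 < ruin_ratio p" "ruin_ratio p < 1"
    using p ruin_ratio_pos ruin_ratio_less_1 by auto
  obtain n0 where n0: "ruin_ratio p ^ n0 < 1/2"
    using real_arch_pow_inv[of "1/2" "ruin_ratio p"] r by auto
  define L where "L = max n0 (N + 1)"
  have "ruin_ratio p ^ L \<le> ruin_ratio p ^ n0"
    using r by (intro power_decreasing) (auto simp: L_def)
  then have "ruin_ratio p ^ L < 1/2"
    using n0 by linarith
  then have "1/2 \<le> ruin_scale p (real L)"
    using r by (simp add: ruin_scale_def powr_realpow)
  moreover have "N < L" by (simp add: L_def)
  ultimately show ?thesis by blast
qed

lemma measure_dyadic_dip_le:
  assumes p: "1/2 < p" "p < 1" and j: "2 ^ j \<le> N" and LN: "N < L"
    and Ne: "2 < real N powr \<epsilon>" and L: "1/2 \<le> ruin_scale p (real L)"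
  shows "measure (bernoulli_stream p) (\<Union>n. {s. visits_in_order n 1 [2 ^ j, int (dip_level N \<epsilon> j), int L] s})
    \<le> 4 * ruin_scale p 1 / real N powr \<epsilon>"
proof -
  let ?Y = "dip_level N \<epsilon> j"
  have Y: "?Y < 2 ^ j" by (rule dip_level_less[OF Ne])
  have "(2::int) ^ j < int L"
    using j LN by (simp flip: of_nat_less_iff)
  then have "measure (bernoulli_stream p) (\<Union>n. {s. visits_in_order n 1 [2 ^ j, int ?Y, int L] s})
      \<le> ruin_scale p 1 * (real ?Y / 2 ^ j) / ruin_scale p (real L)"
    using measure_visits_up_down_up_le[OF p, of "2 ^ j" "int ?Y" "int L"] Y
    by (simp flip: of_nat_less_iff)
  also have "\<dots> \<le> ruin_scale p 1 * (2 / real N powr \<epsilon>) / (1/2)"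
  proof -
    have "real ?Y / 2 ^ j \<le> (2 ^ (j + 1) / real N powr \<epsilon>) / 2 ^ j"
      using dip_level_le by (intro divide_right_mono) auto
    then have "real ?Y / 2 ^ j \<le> 2 / real N powr \<epsilon>"
      by simp
    then have "ruin_scale p 1 * (real ?Y / 2 ^ j) \<le> ruin_scale p 1 * (2 / real N powr \<epsilon>)"
      using ruin_scale_pos[OF p, of 1] by (intro mult_left_mono) auto
    then show ?thesis
      using L ruin_scale_pos[OF p, of 1] Ne by (intro frac_le) auto
  qed
  also have "\<dots> = 4 * ruin_scale p 1 / real N powr \<epsilon>"
    by simp
  finally show ?thesis .
qed

lemma measure_deviation_event_le:
  assumes p: "1/2 < p" "p < 1" and N: "2 \<le> N" and Ne: "2 < real N powr \<epsilon>"
  shows "measure (walk_law p 1) ({w. \<epsilon> < \<bar>max_dev N w\<bar>} \<inter> never_returns0)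
    \<le> (log 2 (real N) + 1) * (4 * ruin_scale p 1 / real N powr \<epsilon>)"
proof -
  interpret prob_space "bernoulli_stream p" by (rule prob_space_bernoulli_stream)
  obtain L where LN: "N < L" and L: "1/2 \<le> ruin_scale p (real L)"
    using ex_ruin_scale_ge_half[OF p] by blast
  define J where "J = nat \<lfloor>log 2 (real N)\<rfloor>"
  define Z where "Z = {s. \<forall>i. 0 < walk_of 1 s i \<and> walk_of 1 s i < int L}"
  define H where "H j = (\<Union>n. {s. visits_in_order n 1 [2 ^ j, int (dip_level N \<epsilon> j), int L] s})" for j
  have Z: "Z \<in> sets (bernoulli_stream p)"
    unfolding Z_def by (intro sets_bernoulli_stream_Collect) measurable
  have "{s. visits_in_order n 1 ts s} \<in> sets (bernoulli_stream p)" for n ts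
    by (intro sets_bernoulli_stream_Collect) measurable
  then have H: "H j \<in> sets (bernoulli_stream p)" for j
    unfolding H_def by (intro sets.countable_UN) auto
  have "measure (walk_law p 1) ({w. \<epsilon> < \<bar>max_dev N w\<bar>} \<inter> never_returns0)
      \<le> measure (bernoulli_stream p) (Z \<union> (\<Union>j\<le>J. H j))"
    using deviation_event_subset[OF N Ne LN] Z H
    by (intro measure_walk_law_le) (auto simp: Z_def H_def J_def)
  also have "\<dots> \<le> measure (bernoulli_stream p) Z + (\<Sum>j\<le>J. measure (bernoulli_stream p) (H j))"
    using Z H by (intro order.trans[OF measure_Un_le] add_left_mono finite_measure_subadditive_finite) auto
  also have "measure (bernoulli_stream p) Z = 0"
    unfolding Z_def by (rule measure_stays_between_forever[OF p])
  also have "(\<Sum>j\<le>J. measure (bernoulli_stream p) (H j)) \<le> (\<Sum>j\<le>J. 4 * ruin_scale p 1 / real N powr \<epsilon>)"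
    unfolding H_def J_def using measure_dyadic_dip_le[OF p _ LN Ne L] pow2_le_iff_le_floor_log2[of N] N
    by (intro sum_mono) auto
  also have "\<dots> = (real J + 1) * (4 * ruin_scale p 1 / real N powr \<epsilon>)"
    by simp
  also have "\<dots> \<le> (log 2 (real N) + 1) * (4 * ruin_scale p 1 / real N powr \<epsilon>)"
    using N ruin_scale_pos[OF p, of 1] by (intro mult_right_mono) (simp_all add: J_def)
  finally show ?thesis by simp
qed

lemma cond_walk_prob_deviation_le:
  assumes p: "1/2 < p" "p < 1" and N: "2 \<le> N" and Ne: "2 < real N powr \<epsilon>"
  shows "cond_walk_prob p 1 {w. \<epsilon> < \<bar>max_dev N w\<bar>} \<le> 4 * (log 2 (real N) + 1) / real N powr \<epsilon>"
proof -
  have scale_1: "0 < ruin_scale p 1"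
    using ruin_scale_pos[OF p, of 1] by simp
  have "ruin_scale p 1 = 1 - ruin_ratio p"
    using ruin_ratio_pos[of p] p by (simp add: ruin_scale_def)
  then have "ruin_scale p 1 \<le> measure (walk_law p 1) never_returns0"
    using measure_avoids_0_ge[OF p] by (simp add: measure_walk_law_never_returns0)
  then have "cond_walk_prob p 1 {w. \<epsilon> < \<bar>max_dev N w\<bar>}
      \<le> measure (walk_law p 1) ({w. \<epsilon> < \<bar>max_dev N w\<bar>} \<inter> never_returns0) / ruin_scale p 1"
    unfolding cond_walk_prob_def using scale_1 by (intro divide_left_mono) auto
  also have "\<dots> \<le> (log 2 (real N) + 1) * (4 * ruin_scale p 1 / real N powr \<epsilon>) / ruin_scale p 1"
    using measure_deviation_event_le[OF p N Ne] scale_1 by (intro divide_right_mono) auto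
  also have "\<dots> = 4 * (log 2 (real N) + 1) / real N powr \<epsilon>"
    using scale_1 by simp
  finally show ?thesis .
qed

lemma cond_walk_prob_nonneg: "0 \<le> cond_walk_prob p l A"
  by (simp add: cond_walk_prob_def)

theorem lemma4p5:
  fixes a :: real and \<phi> :: "nat \<Rightarrow> real"
  assumes "a > 0"
    and "\<And>N. 0 < \<phi> N \<and> \<phi> N \<le> 1"
  shows "\<forall>\<epsilon>>0. (\<lambda>N. cond_walk_prob ((1 + a * \<phi> N) / (2 + a * \<phi> N)) 1
                 {w. \<bar>max_dev N w\<bar> > \<epsilon>}) \<longlonglongrightarrow> 0"
proof (intro allI impI)
  fix \<epsilon> :: real assume "\<epsilon> > 0"
  let ?p = "\<lambda>N. (1 + a * \<phi> N) / (2 + a * \<phi> N)"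
  have p: "1/2 < ?p N" "?p N < 1" for N
  proof -
    have "0 < a * \<phi> N"
      using assms by simp
    then show "1/2 < ?p N" "?p N < 1"
      by (simp_all add: field_simps)
  qed
  have "eventually (\<lambda>N. 2 < real N powr \<epsilon>) sequentially"
    using \<open>\<epsilon> > 0\<close> by real_asymp
  with eventually_ge_at_top[of 2]
  have upper: "eventually (\<lambda>N. cond_walk_prob (?p N) 1 {w. \<epsilon> < \<bar>max_dev N w\<bar>}
      \<le> 4 * (log 2 (real N) + 1) / real N powr \<epsilon>) sequentially"
    by eventually_elim (rule cond_walk_prob_deviation_le[OF p])
  have lim: "(\<lambda>N. 4 * (log 2 (real N) + 1) / real N powr \<epsilon>) \<longlonglongrightarrow> 0"
    using \<open>\<epsilon> > 0\<close> by real_asymp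
  show "(\<lambda>N. cond_walk_prob (?p N) 1 {w. \<bar>max_dev N w\<bar> > \<epsilon>}) \<longlonglongrightarrow> 0"
    by (rule tendsto_sandwich[OF _ upper tendsto_const lim]) (simp add: cond_walk_prob_nonneg)
qed

end
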